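(* Let $r>2$ and $p(z_1,z_2)=1-\frac{z_1+z_2}{r}$. For $(k_1,k_2)\in\mathbb{Z}^2$ let $$c_{k_1,k_2}=\frac{1}{4\pi^2}\int_0^{2\pi}\!\!\int_0^{2\pi}\frac{e^{-i(k_1\theta_1+k_2\theta_2)}}{|p(e^{i\theta_1},e^{i\theta_2})|^2}\,d\theta_1\,d\theta_2$$ be the Fourier coefficients of the spectral density function $1/|p|^2$ on the torus $\mathbb{T}^2$. Then $$c_{k_1,k_2}=\frac{1}{\sqrt{1-\frac{4}{r^2}}}\left(\frac r2-\sqrt{\frac{r^2}{4}-1}\right)^{|k_1|+|k_2|}\quad\text{if } k_1k_2\le 0,$$ and $$c_{k_1,k_2}=\frac{\binom{|k_1|+|k_2|}{|k_1|}}{r^{|k_1|+|k_2|}}\;{}_3F_2\!\left(\begin{matrix}1,\ \frac{|k_1|+|k_2|}{2}+1,\ \frac{|k_1|+|k_2|+1}{2}\\ |k_1|+1,\ |k_2|+1\end{matrix};\frac{4}{r^2}\right)\quad\text{if } k_1k_2>0.$$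
   Context: For $|x|<1$, ${}_3F_2\!\left(\begin{matrix}a,b,c\\ d,e\end{matrix};x\right)=\sum_{n=0}^\infty\frac{(a)_n(b)_n(c)_n}{(d)_n(e)_n}\frac{x^n}{n!}$, where $(q)_0=1$ and $(q)_n=q(q+1)\cdots(q+n-1)$ for $n\ge1$ (Pochhammer symbol). $\mathbb{T}=\{w\in\mathbb{C}:|w|=1\}$. *)

theory Defs
  imports "HOL-Analysis.Analysis"
begin

definition pz :: "real \<Rightarrow> complex \<Rightarrow> complex \<Rightarrow> complex" where
  "pz r z1 z2 = 1 - (z1 + z2) / of_real r"

definition fourier_coeff :: "real \<Rightarrow> int \<Rightarrow> int \<Rightarrow> complex" where
  "fourier_coeff r k1 k2 =
     (1 / (4 * of_real (pi ^ 2))) *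
     integral (cbox (0, 0) (2 * pi, 2 * pi))
       (\<lambda>(t1 :: real, t2 :: real).
          exp (- \<i> * of_real (of_int k1 * t1 + of_int k2 * t2)) /
          of_real ((cmod (pz r (exp (\<i> * of_real t1)) (exp (\<i> * of_real t2)))) ^ 2))"

definition hyp3F2 :: "real \<Rightarrow> real \<Rightarrow> real \<Rightarrow> real \<Rightarrow> real \<Rightarrow> real \<Rightarrow> real" where
  "hyp3F2 a b c d e x =
     (\<Sum>n. pochhammer a n * pochhammer b n * pochhammer c n /
            (pochhammer d n * pochhammer e n) * x ^ n / fact n)"

end

(*
  With u = (z1 + z2) / r we have p = 1 - u and |u| <= 2/r < 1 on the torus, so
  1/|p|^2 = 1/((1 - u)(1 - conj u)) is the double geometric series of u^m (conj u)^n,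
  which may be integrated termwise. Since conj z = 1/z on the torus,
  u^m (conj u)^n = (z1 + z2)^(m+n) z1^-n z2^-n / r^(m+n), whose Fourier coefficients are
  binomial coefficients; only n = m - k1 - k2 contributes. Writing s = |k1| + |k2|, this gives
  c = sum_t binom(s + 2t, t + i) / r^(s+2t), where i is 0 or s when k1 k2 <= 0 and |k1| or |k2|
  otherwise. In the first case the series is the generating function of binom(s + 2t, t),
  namely C(x)^s / sqrt(1 - 4x) with C the Catalan generating function; in the second,
  Legendre's duplication formula identifies its terms with those of the 3F2 series.
*)

theory Submission
  imports Defs
begin

section \<open>Fourier coefficients on the torus\<close>

lemma sums_integral_geometric:
  fixes u g :: "'a::euclidean_space \<Rightarrow> complex"
  assumes u: "continuous_on (cbox a b) u" and g: "continuous_on (cbox a b) g"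
    and u_le: "\<And>x. x \<in> cbox a b \<Longrightarrow> norm (u x) \<le> q" and "q < 1"
  shows "(\<lambda>m. integral (cbox a b) (\<lambda>x. u x ^ m * g x)) sums integral (cbox a b) (\<lambda>x. g x / (1 - u x))"
proof -
  obtain B where B: "\<And>x. x \<in> cbox a b \<Longrightarrow> norm (g x) \<le> B"
    using compact_imp_bounded[OF compact_continuous_image[OF g compact_cbox]]
    by (auto simp: bounded_iff)
  have geometric_le: "(\<Sum>m<M. norm (u x) ^ m) \<le> 1 / (1 - q)" if "x \<in> cbox a b" for x M
  proof -
    have "0 \<le> q"
      using u_le[OF that] norm_ge_zero order_trans by blast
    have "(\<Sum>m<M. norm (u x) ^ m) \<le> (\<Sum>m<M. q ^ m)"
      using u_le[OF that] by (intro sum_mono power_mono) auto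
    also have "\<dots> \<le> (\<Sum>m. q ^ m)"
      using \<open>0 \<le> q\<close> \<open>q < 1\<close> by (intro sum_le_suminf summable_geometric) auto
    finally show ?thesis
      using \<open>0 \<le> q\<close> \<open>q < 1\<close> by (simp add: suminf_geometric)
  qed
  have "(\<lambda>M. integral (cbox a b) (\<lambda>x. \<Sum>m<M. u x ^ m * g x)) \<longlonglongrightarrow> integral (cbox a b) (\<lambda>x. g x / (1 - u x))"
  proof (rule dominated_convergence(2)[where h = "\<lambda>_. B / (1 - q)"])
    show "(\<lambda>x. \<Sum>m<M. u x ^ m * g x) integrable_on cbox a b" for M
      by (intro integrable_continuous continuous_intros u g)
    show "norm (\<Sum>m<M. u x ^ m * g x) \<le> B / (1 - q)" if "x \<in> cbox a b" for M x
    proof -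
      have "norm (\<Sum>m<M. u x ^ m * g x) \<le> (\<Sum>m<M. norm (u x) ^ m) * norm (g x)"
        by (rule order_trans[OF norm_sum]) (simp add: norm_mult norm_power sum_distrib_right)
      also have "\<dots> \<le> 1 / (1 - q) * B"
        using geometric_le[OF that] B[OF that] \<open>q < 1\<close> by (intro mult_mono) (auto intro: sum_nonneg)
      finally show ?thesis by simp
    qed
    show "(\<lambda>M. \<Sum>m<M. u x ^ m * g x) \<longlonglongrightarrow> g x / (1 - u x)" if "x \<in> cbox a b" for x
      using sums_mult2[OF geometric_sums, of "u x" "g x"] u_le[OF that] \<open>q < 1\<close>
      by (simp add: sums_def)
  qed (rule integrable_const)
  then show ?thesis
    by (simp add: sums_def integral_sum integrable_continuous continuous_intros u g)
qed

lemma integral_cis_powi: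
  fixes j :: int
  shows "integral {0..2*pi} (\<lambda>t. cis t powi j) = (if j = 0 then 2 * pi else 0)"
proof (cases "j = 0")
  case False
  let ?F = "\<lambda>t. exp (\<i> * of_int j * of_real t) / (\<i> * of_int j)"
  have "((\<lambda>t. cis t powi j) has_integral ?F (2*pi) - ?F 0) {0..2*pi}"
  proof (rule fundamental_theorem_of_calculus)
    have "cis t powi j = exp (\<i> * of_int j * of_real t)" for t
      unfolding cis_power_int unfolding cis_conv_exp by (simp add: mult_ac)
    then show "(?F has_vector_derivative cis t powi j) (at t within {0..2*pi})" for t
      using False
      by (auto intro!: derivative_eq_intros has_complex_derivative_imp_has_vector_derivative[unfolded o_def])
  qed simp
  moreover have "?F (2*pi) = ?F 0"
    using exp_integer_2pi[of "of_int j"] by (simp add: mult_ac)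
  ultimately show ?thesis
    using False by (simp add: integral_unique)
qed (simp add: scaleR_conv_of_real)

lemma integral_torus_cis_powi:
  fixes j1 j2 :: int
  shows "integral (cbox (0, 0) (2*pi, 2*pi)) (\<lambda>(t1, t2). cis t1 powi j1 * cis t2 powi j2)
       = (if j1 = 0 \<and> j2 = 0 then 4 * pi\<^sup>2 else 0)"
proof -
  have "integral (cbox (0, 0) (2*pi, 2*pi)) (\<lambda>(t1, t2). cis t1 powi j1 * cis t2 powi j2)
      = integral {0..2*pi} (\<lambda>t1. integral {0..2*pi} (\<lambda>t2. cis t1 powi j1 * cis t2 powi j2))"
    by (subst integral_prod_continuous) (auto intro!: continuous_intros simp: case_prod_unfold)
  also have "\<dots> = integral {0..2*pi} (\<lambda>t1. cis t1 powi j1) * integral {0..2*pi} (\<lambda>t2. cis t2 powi j2)"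
    by simp
  also have "\<dots> = (if j1 = 0 \<and> j2 = 0 then 4 * pi\<^sup>2 else 0)"
    by (simp add: integral_cis_powi power2_eq_square)
  finally show ?thesis .
qed

lemma integral_torus_binomial:
  fixes p q :: int
  shows "integral (cbox (0, 0) (2*pi, 2*pi)) (\<lambda>(t1, t2). (cis t1 + cis t2) ^ N * cis t1 powi (- p) * cis t2 powi (- q))
       = of_real (if 0 \<le> p \<and> 0 \<le> q \<and> p + q = int N then 4 * pi\<^sup>2 * real (N choose nat p) else 0)"
proof -
  let ?T = "cbox (0::real, 0::real) (2*pi, 2*pi)"
  have expand: "(cis t1 + cis t2) ^ N * cis t1 powi (- p) * cis t2 powi (- q)
      = (\<Sum>a\<le>N. of_nat (N choose a) * (cis t1 powi (int a - p) * cis t2 powi (int N - int a - q)))" for t1 t2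
  proof -
    have powi_shift: "cis t ^ i * cis t powi (- k) = cis t powi (int i - k)" for t i k
      using power_int_add[of "cis t" "int i" "- k"] by (simp add: power_int_of_nat)
    have "(cis t1 + cis t2) ^ N * cis t1 powi (- p) * cis t2 powi (- q)
        = (\<Sum>a\<le>N. of_nat (N choose a) * ((cis t1 ^ a * cis t1 powi (- p)) * (cis t2 ^ (N - a) * cis t2 powi (- q))))"
      by (simp add: binomial_ring sum_distrib_left sum_distrib_right mult_ac)
    also have "\<dots> = (\<Sum>a\<le>N. of_nat (N choose a) * (cis t1 powi (int a - p) * cis t2 powi (int N - int a - q)))"
      by (intro sum.cong refl) (simp add: powi_shift of_nat_diff)
    finally show ?thesis .
  qed
  have "integral ?T (\<lambda>(t1, t2). (cis t1 + cis t2) ^ N * cis t1 powi (- p) * cis t2 powi (- q))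
      = (\<Sum>a\<le>N. of_nat (N choose a) * integral ?T (\<lambda>(t1, t2). cis t1 powi (int a - p) * cis t2 powi (int N - int a - q)))"
    unfolding expand case_prod_unfold
    by (subst integral_sum) (auto intro!: integrable_continuous continuous_intros)
  also have "\<dots> = (\<Sum>a\<le>N. if a = nat p then of_real (if 0 \<le> p \<and> 0 \<le> q \<and> p + q = int N then 4 * pi\<^sup>2 * real (N choose nat p) else 0) else 0)"
    by (intro sum.cong refl) (auto simp: integral_torus_cis_powi)
  also have "\<dots> = of_real (if 0 \<le> p \<and> 0 \<le> q \<and> p + q = int N then 4 * pi\<^sup>2 * real (N choose nat p) else 0)"
    by (auto simp: sum.delta)
  finally show ?thesis .
qed

definition binomial_fourier_coeff :: "nat \<Rightarrow> nat \<Rightarrow> int \<Rightarrow> int \<Rightarrow> nat" where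
  "binomial_fourier_coeff m n k1 k2 =
     (if 0 \<le> int n + k1 \<and> 0 \<le> int n + k2 \<and> int m - int n = k1 + k2 then m + n choose nat (int n + k1) else 0)"

lemma integral_torus_binomial_cnj:
  fixes k1 k2 :: int
  shows "integral (cbox (0, 0) (2*pi, 2*pi))
           (\<lambda>(t1, t2). (cis t1 + cis t2) ^ m * cnj (cis t1 + cis t2) ^ n * cis t1 powi (- k1) * cis t2 powi (- k2))
       = of_real (4 * pi\<^sup>2 * real (binomial_fourier_coeff m n k1 k2))"
proof -
  have cnj_sum: "cnj (cis t1 + cis t2) = (cis t1 + cis t2) * (inverse (cis t1) * inverse (cis t2))" for t1 t2
    by (simp add: cis_cnj field_simps cis_mult)
  have powi_split: "cis t powi (- (int n + k)) = inverse (cis t) ^ n * cis t powi (- k)" for t k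
    using power_int_add[of "cis t" "- int n" "- k"] by (simp add: power_int_minus power_inverse del: cis_inverse)
  have integrand: "(cis t1 + cis t2) ^ m * cnj (cis t1 + cis t2) ^ n * cis t1 powi (- k1) * cis t2 powi (- k2)
      = (cis t1 + cis t2) ^ (m + n) * cis t1 powi (- (int n + k1)) * cis t2 powi (- (int n + k2))" for t1 t2
    unfolding cnj_sum powi_split by (simp add: power_add power_mult_distrib mult_ac)
  have "integral (cbox (0, 0) (2*pi, 2*pi))
           (\<lambda>(t1, t2). (cis t1 + cis t2) ^ m * cnj (cis t1 + cis t2) ^ n * cis t1 powi (- k1) * cis t2 powi (- k2))
      = integral (cbox (0, 0) (2*pi, 2*pi))
           (\<lambda>(t1, t2). (cis t1 + cis t2) ^ (m + n) * cis t1 powi (- (int n + k1)) * cis t2 powi (- (int n + k2)))"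
    by (simp only: integrand)
  also have "\<dots> = of_real (4 * pi\<^sup>2 * real (binomial_fourier_coeff m n k1 k2))"
    unfolding integral_torus_binomial binomial_fourier_coeff_def
    by (rule arg_cong[where f = of_real]) auto
  finally show ?thesis .
qed

lemma binomial_fourier_coeff_eq_0:
  "n \<noteq> nat (int m - (k1 + k2)) \<Longrightarrow> binomial_fourier_coeff m n k1 k2 = 0"
  by (auto simp: binomial_fourier_coeff_def)

lemma binomial_fourier_coeff_below_diagonal:
  "m < nat k1 + nat k2 \<Longrightarrow> binomial_fourier_coeff m (nat (int m - (k1 + k2))) k1 k2 = 0"
  by (auto simp: binomial_fourier_coeff_def)

lemma binomial_fourier_coeff_diagonal:
  fixes k1 k2 :: int and t :: nat
  defines "m \<equiv> t + (nat k1 + nat k2)"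
  shows "binomial_fourier_coeff m (nat (int m - (k1 + k2))) k1 k2
           = nat \<bar>k1\<bar> + nat \<bar>k2\<bar> + 2 * t choose (t + (nat k1 + nat (- k2)))"
    and "m + nat (int m - (k1 + k2)) = nat \<bar>k1\<bar> + nat \<bar>k2\<bar> + 2 * t"
proof -
  define n where "n = t + (nat (- k1) + nat (- k2))"
  have n: "nat (int m - (k1 + k2)) = n"
    unfolding m_def n_def by arith
  have "0 \<le> int n + k1 \<and> 0 \<le> int n + k2 \<and> int m - int n = k1 + k2"
    unfolding m_def n_def by arith
  moreover have "nat (int n + k1) = t + (nat k1 + nat (- k2))"
    unfolding n_def by arith
  moreover show "m + nat (int m - (k1 + k2)) = nat \<bar>k1\<bar> + nat \<bar>k2\<bar> + 2 * t"
    unfolding n m_def n_def by arith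
  ultimately show "binomial_fourier_coeff m (nat (int m - (k1 + k2))) k1 k2
           = nat \<bar>k1\<bar> + nat \<bar>k2\<bar> + 2 * t choose (t + (nat k1 + nat (- k2)))"
    by (simp add: binomial_fourier_coeff_def n)
qed

definition pz_linear :: "real \<Rightarrow> real \<times> real \<Rightarrow> complex" where
  "pz_linear r = (\<lambda>(t1, t2). (cis t1 + cis t2) / of_real r)"

definition torus_character :: "int \<Rightarrow> int \<Rightarrow> real \<times> real \<Rightarrow> complex" where
  "torus_character j1 j2 = (\<lambda>(t1, t2). cis t1 powi j1 * cis t2 powi j2)"

lemma norm_pz_linear_le:
  assumes "r > 0"
  shows "norm (pz_linear r x) \<le> 2 / r"
proof -
  have "norm (cis (fst x) + cis (snd x)) \<le> 2"
    using norm_triangle_ineq[of "cis (fst x)" "cis (snd x)"] by simp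
  with assms show ?thesis
    by (simp add: pz_linear_def case_prod_unfold norm_divide divide_right_mono)
qed

lemma continuous_on_pz_linear: "r \<noteq> 0 \<Longrightarrow> continuous_on S (pz_linear r)"
  unfolding pz_linear_def case_prod_unfold by (intro continuous_intros) auto

lemma continuous_on_torus_character: "continuous_on S (torus_character j1 j2)"
  unfolding torus_character_def case_prod_unfold by (intro continuous_intros) auto

lemma fourier_coeff_eq_integral:
  "fourier_coeff r k1 k2 =
     integral (cbox (0, 0) (2*pi, 2*pi))
       (\<lambda>x. torus_character (- k1) (- k2) x / (1 - cnj (pz_linear r x)) / (1 - pz_linear r x)) / of_real (4 * pi\<^sup>2)"
proof -
  have "exp (- \<i> * of_real (of_int k1 * t1 + of_int k2 * t2)) /
          of_real ((cmod (pz r (exp (\<i> * of_real t1)) (exp (\<i> * of_real t2)))) ^ 2)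
      = torus_character (- k1) (- k2) (t1, t2) / (1 - cnj (pz_linear r (t1, t2))) / (1 - pz_linear r (t1, t2))" for t1 t2
  proof -
    have character: "torus_character (- k1) (- k2) (t1, t2) = exp (- \<i> * of_real (of_int k1 * t1 + of_int k2 * t2))"
      unfolding torus_character_def case_prod_conv cis_power_int cis_mult unfolding cis_conv_exp
      by (simp add: algebra_simps)
    have "pz r (exp (\<i> * of_real t1)) (exp (\<i> * of_real t2)) = 1 - pz_linear r (t1, t2)"
      by (simp add: pz_def pz_linear_def cis_conv_exp)
    then show ?thesis
      unfolding complex_norm_square character by (simp add: mult.commute)
  qed
  then show ?thesis
    by (simp add: fourier_coeff_def case_prod_unfold)
qed

lemma integral_torus_monomial:
  "integral (cbox (0, 0) (2*pi, 2*pi))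
     (\<lambda>x. cnj (pz_linear r x) ^ n * (pz_linear r x ^ m * torus_character (- k1) (- k2) x))
   = of_real (4 * pi\<^sup>2 * real (binomial_fourier_coeff m n k1 k2) / r ^ (m + n))"
proof -
  have "cnj (pz_linear r x) ^ n * (pz_linear r x ^ m * torus_character (- k1) (- k2) x)
      = of_real (1 / r ^ (m + n)) * (case x of (t1, t2) \<Rightarrow>
          (cis t1 + cis t2) ^ m * cnj (cis t1 + cis t2) ^ n * cis t1 powi (- k1) * cis t2 powi (- k2))" for x
    by (simp add: pz_linear_def torus_character_def case_prod_unfold power_divide power_add field_simps)
  then show ?thesis
    using integral_torus_binomial_cnj[of m n k1 k2] by simp
qed

lemma integral_torus_geometric_cnj:
  fixes k1 k2 :: int and m :: nat
  assumes "r > 2"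
  defines "n \<equiv> nat (int m - (k1 + k2))"
  shows "integral (cbox (0, 0) (2*pi, 2*pi))
           (\<lambda>x. pz_linear r x ^ m * torus_character (- k1) (- k2) x / (1 - cnj (pz_linear r x)))
       = of_real (4 * pi\<^sup>2 * real (binomial_fourier_coeff m n k1 k2) / r ^ (m + n))"
proof -
  let ?c = "\<lambda>n. of_real (4 * pi\<^sup>2 * real (binomial_fourier_coeff m n k1 k2) / r ^ (m + n)) :: complex"
  have "(\<lambda>n. integral (cbox (0, 0) (2*pi, 2*pi))
           (\<lambda>x. cnj (pz_linear r x) ^ n * (pz_linear r x ^ m * torus_character (- k1) (- k2) x)))
        sums integral (cbox (0, 0) (2*pi, 2*pi))
           (\<lambda>x. pz_linear r x ^ m * torus_character (- k1) (- k2) x / (1 - cnj (pz_linear r x)))"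
  proof (rule sums_integral_geometric[where q = "2 / r"])
    have "continuous_on (cbox (0, 0) (2*pi, 2*pi)) (pz_linear r)"
      using assms by (intro continuous_on_pz_linear) simp
    then show "continuous_on (cbox (0, 0) (2*pi, 2*pi)) (\<lambda>x. cnj (pz_linear r x))"
      and "continuous_on (cbox (0, 0) (2*pi, 2*pi)) (\<lambda>x. pz_linear r x ^ m * torus_character (- k1) (- k2) x)"
      by (intro continuous_intros continuous_on_torus_character; assumption)+
  qed (use assms norm_pz_linear_le[of r] in auto)
  moreover have single: "?c = (\<lambda>k. if k = n then ?c k else 0)"
    by (auto simp: n_def binomial_fourier_coeff_eq_0)
  have "?c sums ?c n"
    by (subst single) (rule sums_single)
  ultimately show ?thesis
    unfolding integral_torus_monomial by (rule sums_unique2)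
qed

lemma fourier_coeff_sums_diagonal:
  fixes k1 k2 :: int
  assumes "r > 2"
  shows "(\<lambda>m. of_real (real (binomial_fourier_coeff m (nat (int m - (k1 + k2))) k1 k2)
                        / r ^ (m + nat (int m - (k1 + k2))))) sums fourier_coeff r k1 k2"
proof -
  have pz_linear_ne_1: "pz_linear r x \<noteq> 1" for x
    using norm_pz_linear_le[of r x] assms by auto
  have "(\<lambda>m. integral (cbox (0, 0) (2*pi, 2*pi))
                 (\<lambda>x. pz_linear r x ^ m * (torus_character (- k1) (- k2) x / (1 - cnj (pz_linear r x)))))
        sums integral (cbox (0, 0) (2*pi, 2*pi))
                 (\<lambda>x. torus_character (- k1) (- k2) x / (1 - cnj (pz_linear r x)) / (1 - pz_linear r x))"
  proof (rule sums_integral_geometric[where q = "2 / r"])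
    show u: "continuous_on (cbox (0, 0) (2*pi, 2*pi)) (pz_linear r)"
      using assms by (intro continuous_on_pz_linear) simp
    show "continuous_on (cbox (0, 0) (2*pi, 2*pi)) (\<lambda>x. torus_character (- k1) (- k2) x / (1 - cnj (pz_linear r x)))"
      by (intro continuous_intros continuous_on_torus_character u) (simp add: pz_linear_ne_1)
  qed (use assms norm_pz_linear_le[of r] in auto)
  then have "(\<lambda>m. of_real (4 * pi\<^sup>2 * real (binomial_fourier_coeff m (nat (int m - (k1 + k2))) k1 k2)
                           / r ^ (m + nat (int m - (k1 + k2)))) / of_real (4 * pi\<^sup>2))
        sums fourier_coeff r k1 k2"
    unfolding fourier_coeff_eq_integral
    by (intro sums_divide) (simp add: integral_torus_geometric_cnj[OF assms])
  then show ?thesis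
    by simp
qed

lemma fourier_coeff_sums:
  fixes k1 k2 :: int
  assumes "r > 2"
  shows "(\<lambda>t. of_real (real (nat \<bar>k1\<bar> + nat \<bar>k2\<bar> + 2 * t choose (t + (nat k1 + nat (- k2))))
                        / r ^ (nat \<bar>k1\<bar> + nat \<bar>k2\<bar> + 2 * t))) sums fourier_coeff r k1 k2"
proof -
  let ?f = "\<lambda>m. of_real (real (binomial_fourier_coeff m (nat (int m - (k1 + k2))) k1 k2)
                          / r ^ (m + nat (int m - (k1 + k2)))) :: complex"
  have "(\<lambda>t. ?f (t + (nat k1 + nat k2))) sums fourier_coeff r k1 k2"
    using fourier_coeff_sums_diagonal[OF assms]
    by (subst sums_zero_iff_shift) (simp_all add: binomial_fourier_coeff_below_diagonal)
  then show ?thesis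
    by (simp only: binomial_fourier_coeff_diagonal)
qed

section \<open>Binomial series\<close>

lemma summable_binomial_quarter:
  fixes x :: real
  assumes "0 \<le> x" "x < 1/4"
  shows "summable (\<lambda>j. real (s + 2 * j choose i j) * x ^ j)"
proof (rule summable_comparison_test')
  show "summable (\<lambda>j. 2 ^ s * (4 * x) ^ j)"
    using assms by (intro summable_mult summable_geometric) auto
  show "norm (real (s + 2 * j choose i j) * x ^ j) \<le> 2 ^ s * (4 * x) ^ j" for j
  proof -
    have "real (s + 2 * j choose i j) \<le> 2 ^ (s + 2 * j)"
      by (metis binomial_le_pow2 of_nat_le_iff of_nat_numeral of_nat_power)
    then have "real (s + 2 * j choose i j) * x ^ j \<le> 2 ^ (s + 2 * j) * x ^ j"
      using assms by (intro mult_right_mono) auto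
    then show ?thesis
      using assms by (simp add: power_add power_mult power_mult_distrib)
  qed
qed

lemma gbinomial_minus_half_central:
  "((- 1/2 :: real) gchoose n) * (- 4) ^ n = real (2 * n choose n)"
proof -
  have "pochhammer (2 * (1/2 :: real)) (2 * n) = of_nat (2 ^ (2 * n)) * pochhammer (1/2) n * pochhammer (1/2 + 1/2) n"
    by (rule pochhammer_double)
  then have fact_double: "fact (2 * n) = 4 ^ n * pochhammer (1/2 :: real) n * fact n"
    by (simp add: pochhammer_fact power_mult)
  have "real (2 * n choose n) = fact (2 * n) / (fact n * fact n)"
    by (simp add: binomial_fact)
  also have "\<dots> = 4 ^ n * pochhammer (1/2) n / fact n"
    by (simp add: fact_double)
  also have "\<dots> = ((- 1/2 :: real) gchoose n) * (- 4) ^ n"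
    by (simp add: gbinomial_pochhammer power_mult_distrib[symmetric])
  finally show ?thesis ..
qed

lemma central_binomial_sums:
  fixes x :: real
  assumes "0 \<le> x" "x < 1/4"
  shows "(\<lambda>j. real (2 * j choose j) * x ^ j) sums (1 / sqrt (1 - 4 * x))"
proof -
  have "(\<lambda>j. ((- 1/2) gchoose j) * (- 4 * x) ^ j) sums (1 + - 4 * x) powr (- 1/2)"
    using assms by (intro gen_binomial_real) auto
  moreover have "(1 + - 4 * x) powr (- 1/2) = 1 / sqrt (1 - 4 * x)"
    using assms by (simp add: powr_minus_divide powr_half_sqrt)
  moreover have "((- 1/2) gchoose j) * (- 4 * x) ^ j = real (2 * j choose j) * x ^ j" for j
    by (simp only: power_mult_distrib mult.assoc [symmetric] gbinomial_minus_half_central)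
  ultimately show ?thesis
    by simp
qed

lemma binomial_offset_sums_one:
  fixes x :: real
  assumes "0 < x" "x < 1/4"
  shows "(\<lambda>j. real (1 + 2 * j choose j) * x ^ j) sums ((1 / sqrt (1 - 4 * x) - 1) / (2 * x))"
proof -
  have doubling: "real (2 * Suc j choose Suc j) * x ^ Suc j = 2 * x * (real (1 + 2 * j choose j) * x ^ j)" for j
  proof -
    have "(Suc (Suc (2 * j)) choose Suc j) = (Suc (2 * j) choose j) + (Suc (2 * j) choose Suc j)"
      by (rule binomial_Suc_Suc)
    moreover have "(Suc (2 * j) choose Suc j) = (Suc (2 * j) choose j)"
      using binomial_symmetric[of j "Suc (2 * j)"] by simp
    ultimately show ?thesis
      by simp
  qed
  have "(\<lambda>j. real (2 * Suc j choose Suc j) * x ^ Suc j) sums (1 / sqrt (1 - 4 * x) - 1)"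
    using central_binomial_sums[of x] assms by (subst sums_Suc_iff) simp
  then have "(\<lambda>j. 2 * x * (real (1 + 2 * j choose j) * x ^ j)) sums (1 / sqrt (1 - 4 * x) - 1)"
    by (simp only: doubling)
  then have "(\<lambda>j. 2 * x * (real (1 + 2 * j choose j) * x ^ j) / (2 * x)) sums ((1 / sqrt (1 - 4 * x) - 1) / (2 * x))"
    by (rule sums_divide)
  with assms show ?thesis
    by simp
qed

lemma binomial_offset_pascal:
  fixes x :: real
  assumes "0 \<le> x" "x < 1/4"
  shows "(\<Sum>j. real (s + 1 + 2 * j choose j) * x ^ j)
       = (\<Sum>j. real (s + 2 * j choose j) * x ^ j) + x * (\<Sum>j. real (s + 2 + 2 * j choose j) * x ^ j)"
proof -
  define g where "g s = (\<Sum>j. real (s + 2 * j choose j) * x ^ j)" for s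
  have g_sums: "(\<lambda>j. real (s + 2 * j choose j) * x ^ j) sums g s" for s
    unfolding g_def using assms by (intro summable_sums summable_binomial_quarter)
  have "real (s + 1 + 2 * Suc j choose Suc j) * x ^ Suc j
      = x * (real (s + 2 + 2 * j choose j) * x ^ j) + real (s + 2 * Suc j choose Suc j) * x ^ Suc j" for j
  proof -
    have "s + 1 + 2 * Suc j = Suc (s + 2 + 2 * j)" "s + 2 * Suc j = s + 2 + 2 * j"
      by simp_all
    then show ?thesis
      by (simp only: binomial_Suc_Suc) (simp add: algebra_simps)
  qed
  moreover have "(\<lambda>j. real (s + 1 + 2 * Suc j choose Suc j) * x ^ Suc j) sums (g (s + 1) - 1)"
    using g_sums[of "s + 1"] by (subst sums_Suc_iff) simp
  moreover have "(\<lambda>j. x * (real (s + 2 + 2 * j choose j) * x ^ j) + real (s + 2 * Suc j choose Suc j) * x ^ Suc j)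
      sums (x * g (s + 2) + (g s - 1))"
    using g_sums[of s] by (intro sums_add sums_mult g_sums) (subst sums_Suc_iff; simp)
  ultimately have "g (s + 1) = g s + x * g (s + 2)"
    using sums_unique2 by fastforce
  then show ?thesis
    by (simp add: g_def)
qed

text \<open>The Catalan generating function c solves x c^2 = c - 1, the characteristic equation of the
  recurrence in binomial_offset_pascal. Hence c^s / sqrt (1 - 4 x) satisfies that recurrence too, and
  it agrees with the sums at s = 0 and s = 1.\<close>

lemma binomial_offset_sums:
  fixes x :: real
  assumes "0 < x" "x < 1/4"
  shows "(\<lambda>j. real (s + 2 * j choose j) * x ^ j) sums (((1 - sqrt (1 - 4 * x)) / (2 * x)) ^ s / sqrt (1 - 4 * x))"
proof -
  define w where "w = sqrt (1 - 4 * x)"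
  define c where "c = (1 - w) / (2 * x)"
  define g where "g s = (\<Sum>j. real (s + 2 * j choose j) * x ^ j)" for s
  have g_sums: "(\<lambda>j. real (s + 2 * j choose j) * x ^ j) sums g s" for s
    unfolding g_def using assms by (intro summable_sums summable_binomial_quarter) auto
  have w: "0 < w" "w\<^sup>2 = 1 - 4 * x"
    using assms by (auto simp: w_def)
  have g0: "g 0 = 1 / w"
    using g_sums[of 0] central_binomial_sums[of x] assms by (simp add: w_def sums_unique2)
  have g1: "g 1 = c / w"
    using g_sums[of 1] binomial_offset_sums_one[OF assms] w assms
    by (simp add: sums_unique2 c_def w_def field_simps)
  have pascal: "g (s + 1) = g s + x * g (s + 2)" for s
    unfolding g_def using binomial_offset_pascal[of x s] assms by simp
  have c_root: "x * c\<^sup>2 = c - 1"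
  proof -
    have "x * c\<^sup>2 - (c - 1) = (w\<^sup>2 - (1 - 4 * x)) / (4 * x)"
      using assms by (simp add: c_def field_simps power2_eq_square)
    then show ?thesis
      using w by simp
  qed
  have "g s = c ^ s / w \<and> g (Suc s) = c ^ Suc s / w"
  proof (induction s)
    case 0
    then show ?case
      using g0 g1 by simp
  next
    case (Suc s)
    have "x * g (s + 2) = c ^ s * (c - 1) / w"
      using pascal[of s] Suc by (simp add: algebra_simps diff_divide_distrib)
    also have "\<dots> = x * (c ^ Suc (Suc s) / w)"
      by (simp flip: c_root add: power2_eq_square algebra_simps)
    finally have "g (Suc (Suc s)) = c ^ Suc (Suc s) / w"
      using assms by (subst (asm) mult_left_cancel) auto
    then show ?case
      using Suc by simp
  qed
  then show ?thesis
    using g_sums[of s] by (simp add: c_def w_def)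
qed

lemma pochhammer_of_nat_plus_one:
  "pochhammer (real a + 1) n = fact (a + n) / fact a"
proof -
  have "fact (a + n) = fact a * pochhammer (real a + 1) n"
    using pochhammer_product'[of "1 :: real" a n] by (simp add: pochhammer_fact add.commute)
  then show ?thesis
    by simp
qed

lemma binomial_hypergeometric_term:
  fixes x :: real
  shows "real (a + b + 2 * j choose (j + a)) * x ^ j
       = real (a + b choose a) *
         (pochhammer 1 j * pochhammer ((real a + real b) / 2 + 1) j * pochhammer ((real a + real b + 1) / 2) j
          / (pochhammer (real a + 1) j * pochhammer (real b + 1) j) * (4 * x) ^ j / fact j)"
proof -
  define s where "s = a + b"
  have halves: "2 * ((real s + 1) / 2) = real s + 1" "(real s + 1) / 2 + 1/2 = real s / 2 + 1"
    by (simp_all add: field_simps)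
  have "(of_nat (2 ^ (2 * j)) :: real) = 4 ^ j"
    by (simp add: power_mult)
  with pochhammer_double[of "(real s + 1) / 2" j]
  have "pochhammer (real s + 1) (2 * j) = 4 ^ j * pochhammer ((real s + 1) / 2) j * pochhammer (real s / 2 + 1) j"
    by (simp only: halves)
  then have double: "4 ^ j * pochhammer ((real s + 1) / 2) j * pochhammer (real s / 2 + 1) j = fact (s + 2 * j) / fact s"
    by (simp add: pochhammer_of_nat_plus_one)
  have "real (s + 2 * j choose (j + a)) = fact (s + 2 * j) / (fact (a + j) * fact (b + j))"
    by (simp add: binomial_fact s_def algebra_simps)
  also have "\<dots> = fact s / (fact a * fact b) * ((fact (s + 2 * j) / fact s) / ((fact (a + j) / fact a) * (fact (b + j) / fact b)))"
    by (simp add: field_simps)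
  also have "\<dots> = real (s choose a) *
      (4 ^ j * pochhammer ((real s + 1) / 2) j * pochhammer (real s / 2 + 1) j / (pochhammer (real a + 1) j * pochhammer (real b + 1) j))"
    by (simp only: double pochhammer_of_nat_plus_one) (simp add: binomial_fact s_def)
  finally show ?thesis
    by (simp add: s_def pochhammer_fact [symmetric] power_mult_distrib field_simps)
qed

lemma binomial_hypergeometric_sums:
  fixes x :: real
  assumes "0 \<le> x" "x < 1/4"
  shows "(\<lambda>j. real (a + b + 2 * j choose (j + a)) * x ^ j)
           sums (real (a + b choose a) * hyp3F2 1 ((real a + real b) / 2 + 1) ((real a + real b + 1) / 2) (real a + 1) (real b + 1) (4 * x))"
proof -
  let ?f = "\<lambda>j. real (a + b + 2 * j choose (j + a)) * x ^ j"
  define C where "C = real (a + b choose a)"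
  have "C > 0"
    by (simp add: C_def)
  have "?f sums suminf ?f"
    using assms by (intro summable_sums summable_binomial_quarter)
  then have "(\<lambda>j. ?f j / C) sums (suminf ?f / C)"
    by (rule sums_divide)
  then have "hyp3F2 1 ((real a + real b) / 2 + 1) ((real a + real b + 1) / 2) (real a + 1) (real b + 1) (4 * x) = suminf ?f / C"
    unfolding hyp3F2_def binomial_hypergeometric_term C_def [symmetric] using \<open>C > 0\<close>
    by (simp add: sums_iff)
  then show ?thesis
    using \<open>?f sums suminf ?f\<close> \<open>C > 0\<close> by (simp add: C_def)
qed

lemma sums_inverse_square_powers:
  fixes r :: real
  assumes "r \<noteq> 0" "(\<lambda>j. f j * (1 / r\<^sup>2) ^ j) sums c"
  shows "(\<lambda>j. f j / r ^ (s + 2 * j)) sums (c / r ^ s)"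
proof -
  have "f j / r ^ (s + 2 * j) = f j * (1 / r\<^sup>2) ^ j / r ^ s" for j
    by (simp add: power_add power_mult power_one_over)
  then show ?thesis
    using sums_divide[OF assms(2), of "r ^ s"] by simp
qed

lemma inverse_square_lt_quarter:
  fixes r :: real
  assumes "r > 2"
  shows "1 / r\<^sup>2 < 1/4"
proof -
  have "4 < r\<^sup>2"
    using power_strict_mono[of 2 r 2] assms by simp
  then show ?thesis
    by (simp add: divide_less_eq)
qed

lemma binomial_offset_sums_inverse_square:
  fixes r :: real
  assumes "r > 2"
  shows "(\<lambda>j. real (s + 2 * j choose j) / r ^ (s + 2 * j))
           sums (1 / sqrt (1 - 4 / r\<^sup>2) * (r / 2 - sqrt (r\<^sup>2 / 4 - 1)) ^ s)"
proof -
  define w where "w = sqrt (1 - 4 / r\<^sup>2)"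
  have x: "0 < 1 / r\<^sup>2" "1 / r\<^sup>2 < 1/4"
    using assms inverse_square_lt_quarter by auto
  have "sqrt (r\<^sup>2 / 4 - 1) = r / 2 * w"
  proof -
    have "r\<^sup>2 / 4 - 1 = (r / 2)\<^sup>2 * (1 - 4 / r\<^sup>2)"
      using assms by (simp add: field_simps power2_eq_square)
    then show ?thesis
      using assms by (simp add: w_def real_sqrt_mult)
  qed
  define c where "c = (1 - sqrt (1 - 4 * (1 / r\<^sup>2))) / (2 * (1 / r\<^sup>2))"
  have c_div: "c / r = r / 2 - sqrt (r\<^sup>2 / 4 - 1)"
    using assms \<open>sqrt (r\<^sup>2 / 4 - 1) = r / 2 * w\<close> by (simp add: c_def w_def field_simps power2_eq_square)
  have closed_form: "c ^ s / sqrt (1 - 4 * (1 / r\<^sup>2)) / r ^ s = 1 / sqrt (1 - 4 / r\<^sup>2) * (r / 2 - sqrt (r\<^sup>2 / 4 - 1)) ^ s"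
    unfolding c_div [symmetric] power_divide by simp
  have "(\<lambda>j. real (s + 2 * j choose j) / r ^ (s + 2 * j)) sums (c ^ s / sqrt (1 - 4 * (1 / r\<^sup>2)) / r ^ s)"
    using assms binomial_offset_sums[OF x, of s] unfolding c_def by (intro sums_inverse_square_powers) auto
  then show ?thesis
    unfolding closed_form .
qed

lemma binomial_hypergeometric_sums_inverse_square:
  fixes r :: real
  assumes "r > 2"
  shows "(\<lambda>j. real (a + b + 2 * j choose (j + a)) / r ^ (a + b + 2 * j))
           sums (real (a + b choose a) / r ^ (a + b) *
                 hyp3F2 1 ((real a + real b) / 2 + 1) ((real a + real b + 1) / 2) (real a + 1) (real b + 1) (4 / r\<^sup>2))"
proof -
  have x: "0 \<le> 1 / r\<^sup>2" "1 / r\<^sup>2 < 1/4"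
    using assms inverse_square_lt_quarter by auto
  from sums_inverse_square_powers[OF _ binomial_hypergeometric_sums[OF x, of a b], of "a + b"] assms
  show ?thesis
    by simp
qed

lemma binomial_symmetric_offset:
  "i \<le> s \<Longrightarrow> (s + 2 * t choose (t + i)) = (s + 2 * t choose (t + (s - i)))"
  using binomial_symmetric[of "t + i" "s + 2 * t"] by (simp add: algebra_simps)

theorem theorem1:
  fixes r :: real and k1 k2 :: int
  assumes "r > 2"
  shows "(k1 * k2 \<le> 0 \<longrightarrow>
            fourier_coeff r k1 k2 =
              of_real ((1 / sqrt (1 - 4 / r ^ 2)) *
                       (r / 2 - sqrt (r ^ 2 / 4 - 1)) ^ nat (\<bar>k1\<bar> + \<bar>k2\<bar>)))
       \<and> (k1 * k2 > 0 \<longrightarrow>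
            fourier_coeff r k1 k2 =
              of_real (real (nat (\<bar>k1\<bar> + \<bar>k2\<bar>) choose nat \<bar>k1\<bar>) /
                       r ^ nat (\<bar>k1\<bar> + \<bar>k2\<bar>) *
                       hyp3F2 1 (real_of_int (\<bar>k1\<bar> + \<bar>k2\<bar>) / 2 + 1)
                              ((real_of_int (\<bar>k1\<bar> + \<bar>k2\<bar>) + 1) / 2)
                              (real_of_int \<bar>k1\<bar> + 1) (real_of_int \<bar>k2\<bar> + 1)
                              (4 / r ^ 2)))"
proof -
  define a b where "a = nat \<bar>k1\<bar>" and "b = nat \<bar>k2\<bar>"
  define i where "i = nat k1 + nat (- k2)"
  have coeff: "fourier_coeff r k1 k2 = of_real c"
    if "(\<lambda>t. real (a + b + 2 * t choose (t + i)) / r ^ (a + b + 2 * t)) sums c" for c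
    using fourier_coeff_sums[OF assms, of k1 k2, folded a_def b_def i_def] sums_of_real[OF that]
    by (rule sums_unique2)
  have ab: "nat (\<bar>k1\<bar> + \<bar>k2\<bar>) = a + b" "nat \<bar>k1\<bar> = a"
    "real_of_int (\<bar>k1\<bar> + \<bar>k2\<bar>) = real a + real b" "real_of_int \<bar>k1\<bar> = real a" "real_of_int \<bar>k2\<bar> = real b"
    by (simp_all add: a_def b_def nat_add_distrib)
  have "i = 0 \<or> i = a + b" if "k1 * k2 \<le> 0"
    using that by (auto simp: i_def a_def b_def mult_le_0_iff)
  then have opposite: "(a + b + 2 * t choose (t + i)) = (a + b + 2 * t choose t)" if "k1 * k2 \<le> 0" for t
    using that binomial_symmetric_offset[of "a + b" "a + b" t] by auto
  have "i = a \<or> i = b" if "k1 * k2 > 0"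
    using that by (auto simp: i_def a_def b_def zero_less_mult_iff)
  then have same: "(a + b + 2 * t choose (t + i)) = (a + b + 2 * t choose (t + a))" if "k1 * k2 > 0" for t
    using that binomial_symmetric_offset[of b "a + b" t] by auto
  show ?thesis
    unfolding ab
    using coeff opposite same binomial_offset_sums_inverse_square[OF assms, of "a + b"]
      binomial_hypergeometric_sums_inverse_square[OF assms, of a b]
    by auto
qed

end
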